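(* Let $\Gamma$ be an edge-regular graph that has a regular clique, and suppose that $\Gamma$ is not strongly regular. Then $\Gamma$ has a regular clique of order at least $4$.
   Context: A graph is edge-regular if it is non-empty, $k$-regular for some $k$, and every two adjacent vertices have exactly $\lambda$ common neighbours for some constant $\lambda$. It is strongly regular if moreover every two distinct non-adjacent vertices have exactly $\mu$ common neighbours for some constant $\mu$. A clique $\mathcal C$ is regular if every vertex not in $\mathcal C$ is adjacent to the same number $e>0$ of vertices of $\mathcal C$. *)

theory Defs
  imports Main
begin

definition simple_graph :: "'a set \<Rightarrow> ('a \<Rightarrow> 'a \<Rightarrow> bool) \<Rightarrow> bool" where
  "simple_graph V E \<longleftrightarrow> finite V \<and> (\<forall>x y. E x y \<longrightarrow> x \<in> V \<and> y \<in> V)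
     \<and> (\<forall>x y. E x y \<longrightarrow> E y x) \<and> (\<forall>x. \<not> E x x)"

definition nbrs :: "'a set \<Rightarrow> ('a \<Rightarrow> 'a \<Rightarrow> bool) \<Rightarrow> 'a \<Rightarrow> 'a set" where
  "nbrs V E x = {y \<in> V. E x y}"

text \<open>Non-empty = has at least one edge.\<close>
definition edge_regular :: "'a set \<Rightarrow> ('a \<Rightarrow> 'a \<Rightarrow> bool) \<Rightarrow> bool" where
  "edge_regular V E \<longleftrightarrow> simple_graph V E \<and> (\<exists>x y. E x y)
     \<and> (\<exists>k. \<forall>x\<in>V. card (nbrs V E x) = k)
     \<and> (\<exists>lam. \<forall>x y. E x y \<longrightarrow> card (nbrs V E x \<inter> nbrs V E y) = lam)"

definition strongly_regular :: "'a set \<Rightarrow> ('a \<Rightarrow> 'a \<Rightarrow> bool) \<Rightarrow> bool" where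
  "strongly_regular V E \<longleftrightarrow> edge_regular V E
     \<and> (\<exists>mu. \<forall>x\<in>V. \<forall>y\<in>V. x \<noteq> y \<and> \<not> E x y \<longrightarrow> card (nbrs V E x \<inter> nbrs V E y) = mu)"

definition is_clique :: "'a set \<Rightarrow> ('a \<Rightarrow> 'a \<Rightarrow> bool) \<Rightarrow> 'a set \<Rightarrow> bool" where
  "is_clique V E C \<longleftrightarrow> C \<subseteq> V \<and> (\<forall>x\<in>C. \<forall>y\<in>C. x \<noteq> y \<longrightarrow> E x y)"

definition regular_clique :: "'a set \<Rightarrow> ('a \<Rightarrow> 'a \<Rightarrow> bool) \<Rightarrow> 'a set \<Rightarrow> bool" where
  "regular_clique V E C \<longleftrightarrow> is_clique V E C
     \<and> (\<exists>e::nat. e > 0 \<and> (\<forall>v\<in>V - C. card {w \<in> C. E v w} = e))"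

end

theory Submission
  imports Defs
begin

text \<open>Let \<open>C\<close> be a regular clique with \<open>|C| \<le> 3\<close> and nexus \<open>e\<close> in an edge-regular graph
  with parameters \<open>(|V|, k, lam)\<close>. If \<open>e = |C|\<close> (or \<open>C = V\<close>) a vertex of \<open>C\<close> is adjacent
  to everything, so the graph is complete. If \<open>e = |C| - 1\<close>, counting the neighbours of an
  edge of \<open>C\<close> gives \<open>lam + |V| = 2k\<close>, which forces a complete multipartite graph. The only
  remaining case is \<open>|C| = 3\<close>, \<open>e = 1\<close>: then \<open>lam = 1\<close> and \<open>|V| = 3(k - 1)\<close>, and such a
  graph is again strongly regular.\<close>

locale edge_regular_graph =
  fixes V :: "'a set" and E :: "'a \<Rightarrow> 'a \<Rightarrow> bool" and k lam :: nat
  assumes simple: "simple_graph V E"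
    and has_edge: "\<exists>x y. E x y"
    and degree: "x \<in> V \<Longrightarrow> card (nbrs V E x) = k"
    and common_nbrs: "E x y \<Longrightarrow> card (nbrs V E x \<inter> nbrs V E y) = lam"

lemma edge_regular_iff_edge_regular_graph:
  "edge_regular V E \<longleftrightarrow> (\<exists>k lam. edge_regular_graph V E k lam)"
  unfolding edge_regular_def edge_regular_graph_def by blast

context edge_regular_graph
begin

lemma finite_V: "finite V"
  using simple by (simp add: simple_graph_def)

lemma adj_in_V: "E x y \<Longrightarrow> x \<in> V" "E x y \<Longrightarrow> y \<in> V"
  using simple by (simp_all add: simple_graph_def)

lemma adj_sym: "E x y \<Longrightarrow> E y x"
  using simple by (simp add: simple_graph_def)

lemma adj_irrefl: "\<not> E x x"
  using simple by (simp add: simple_graph_def)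

lemma mem_nbrs [simp]: "y \<in> nbrs V E x \<longleftrightarrow> E x y"
  using adj_in_V by (auto simp: nbrs_def)

lemma nbrs_subset: "nbrs V E x \<subseteq> V"
  by (auto simp: nbrs_def)

lemma finite_nbrs [simp]: "finite (nbrs V E x)"
  using finite_subset[OF nbrs_subset finite_V] .

lemma clique_subset_V: "is_clique V E C \<Longrightarrow> C \<subseteq> V"
  by (simp add: is_clique_def)

lemma finite_clique: "is_clique V E C \<Longrightarrow> finite C"
  using clique_subset_V finite_V by (rule finite_subset)

lemma card_Diff_add_card: "C \<subseteq> V \<Longrightarrow> card (V - C) + card C = card V"
  using card_Diff_subset[OF finite_subset[OF _ finite_V]] card_mono[OF finite_V] by fastforce

lemma strongly_regular_iff:
  "strongly_regular V E \<longleftrightarrow>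
    (\<exists>mu. \<forall>x\<in>V. \<forall>y\<in>V. x \<noteq> y \<and> \<not> E x y \<longrightarrow> card (nbrs V E x \<inter> nbrs V E y) = mu)"
  using edge_regular_iff_edge_regular_graph edge_regular_graph_axioms
  unfolding strongly_regular_def by blast

lemma strongly_regular_if_universal_vertex:
  assumes a: "a \<in> V" and universal: "\<And>y. y \<in> V \<Longrightarrow> y \<noteq> a \<Longrightarrow> E a y"
  shows "strongly_regular V E"
proof -
  have nbrs_eq: "nbrs V E x = V - {x}" if "x \<in> V" "card (nbrs V E x) = card V - 1" for x
  proof (rule card_subset_eq)
    show "nbrs V E x \<subseteq> V - {x}"
      using nbrs_subset adj_irrefl by auto
  qed (use that finite_V in auto)
  have "nbrs V E a = V - {a}"
    using universal adj_in_V adj_irrefl by (auto simp: nbrs_def)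
  hence "k = card V - 1"
    using degree[OF a] a finite_V by simp
  hence "E x y" if "x \<in> V" "y \<in> V" "x \<noteq> y" for x y
    using nbrs_eq[of x] degree that by (metis Diff_iff mem_nbrs singletonD)
  thus ?thesis
    unfolding strongly_regular_iff by blast
qed

text \<open>A neighbour \<open>z\<close> of \<open>x\<close> has at most \<open>lam + 1\<close> neighbours in \<open>{x} \<union> N(x)\<close>, hence at
  least \<open>k - lam - 1 = |V| - k - 1\<close> outside it, i.e. it is adjacent to all of them.\<close>
lemma nbrs_subset_if_nonadjacent:
  assumes eq: "lam + card V = 2 * k"
    and xy: "x \<in> V" "y \<in> V" "x \<noteq> y" "\<not> E x y"
  shows "nbrs V E x \<subseteq> nbrs V E y"
proof
  fix z assume "z \<in> nbrs V E x"
  hence xz: "E x z" by simp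
  define W where "W = V - insert x (nbrs V E x)"
  have closed_nbhd: "insert x (nbrs V E x) \<subseteq> V" "card (insert x (nbrs V E x)) = k + 1"
    using xy nbrs_subset degree adj_irrefl by auto
  hence card_W: "card W + k + 1 = card V"
    unfolding W_def using finite_V card_mono[OF finite_V closed_nbhd(1)]
    by (simp add: card_Diff_subset)
  have "nbrs V E z \<subseteq> (nbrs V E z \<inter> nbrs V E x) \<union> {x} \<union> (nbrs V E z \<inter> W)"
    using nbrs_subset W_def by auto
  hence "card (nbrs V E z) \<le> card ((nbrs V E z \<inter> nbrs V E x) \<union> {x} \<union> (nbrs V E z \<inter> W))"
    by (intro card_mono) auto
  also have "\<dots> \<le> card (nbrs V E z \<inter> nbrs V E x) + 1 + card (nbrs V E z \<inter> W)"
    using card_Un_le[of "(nbrs V E z \<inter> nbrs V E x) \<union> {x}" "nbrs V E z \<inter> W"]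
      card_Un_le[of "nbrs V E z \<inter> nbrs V E x" "{x}"] by simp
  finally have "k \<le> lam + 1 + card (nbrs V E z \<inter> W)"
    using degree[OF adj_in_V(2)[OF xz]] common_nbrs[OF adj_sym[OF xz]] by (simp add: Int_commute)
  hence "card W \<le> card (nbrs V E z \<inter> W)"
    using eq card_W by linarith
  hence "nbrs V E z \<inter> W = W"
    using card_seteq[of W "nbrs V E z \<inter> W"] finite_V W_def by blast
  moreover have "y \<in> W"
    using xy W_def by auto
  ultimately have "E z y"
    by (metis IntD1 mem_nbrs)
  thus "z \<in> nbrs V E y"
    by (simp add: adj_sym)
qed

lemma strongly_regular_if_lam_add_card_eq:
  assumes "lam + card V = 2 * k"
  shows "strongly_regular V E"
  unfolding strongly_regular_iff
proof (intro exI ballI impI)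
  fix x y assume "x \<in> V" "y \<in> V" "x \<noteq> y \<and> \<not> E x y"
  hence "nbrs V E x = nbrs V E y"
    using nbrs_subset_if_nonadjacent[OF assms] adj_sym by blast
  thus "card (nbrs V E x \<inter> nbrs V E y) = k"
    using degree \<open>y \<in> V\<close> by simp
qed

lemma card_nbrs_outside_clique:
  assumes clique: "is_clique V E C" and a: "a \<in> C"
  shows "card (nbrs V E a - C) + card C = k + 1"
proof -
  have C: "C \<subseteq> V" "finite C"
    using clique by (simp_all add: clique_subset_V finite_clique)
  have "nbrs V E a \<inter> C = C - {a}"
    using clique a adj_irrefl by (auto simp: is_clique_def)
  hence "k = card (C - {a}) + card (nbrs V E a - C)"
    using card_Int_Diff[of "nbrs V E a" C] degree a C by auto
  thus ?thesis
    using card_Suc_Diff1[OF C(2) a] by linarith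
qed

lemma card_common_nbrs_in_clique:
  assumes clique: "is_clique V E C" and ab: "a \<in> C" "b \<in> C" "a \<noteq> b"
  shows "lam + 2 = card C + card ((nbrs V E a - C) \<inter> (nbrs V E b - C))"
proof -
  have C: "C \<subseteq> V" "finite C"
    using clique by (simp_all add: clique_subset_V finite_clique)
  have "nbrs V E a \<inter> nbrs V E b \<inter> C = C - {a, b}"
    using clique ab adj_irrefl by (auto simp: is_clique_def)
  moreover have "nbrs V E a \<inter> nbrs V E b - C = (nbrs V E a - C) \<inter> (nbrs V E b - C)"
    by blast
  moreover have "E a b"
    using clique ab by (simp add: is_clique_def)
  ultimately have "lam = card (C - {a, b}) + card ((nbrs V E a - C) \<inter> (nbrs V E b - C))"
    using card_Int_Diff[of "nbrs V E a \<inter> nbrs V E b" C] common_nbrs by simp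
  moreover have "card (C - {a, b}) + 2 = card C"
    using ab C card_mono[OF C(2), of "{a, b}"] by (simp add: card_Diff_subset)
  ultimately show ?thesis
    by simp
qed

lemma outside_nbrs_disjoint_if_nexus_one:
  assumes nexus: "\<And>v. v \<in> V - C \<Longrightarrow> card {w \<in> C. E v w} = 1"
    and ab: "a \<in> C" "b \<in> C" "a \<noteq> b"
  shows "(nbrs V E a - C) \<inter> (nbrs V E b - C) = {}"
proof (rule ccontr)
  assume "(nbrs V E a - C) \<inter> (nbrs V E b - C) \<noteq> {}"
  then obtain v where "E a v" "E b v" "v \<notin> C"
    by auto
  hence v: "v \<in> V - C" "E v a" "E v b"
    using adj_in_V adj_sym by auto
  have "card {a, b} \<le> card {w \<in> C. E v w}"
    using v ab nexus[OF v(1)] by (intro card_mono) (auto intro: card_ge_0_finite)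
  thus False
    using nexus[OF v(1)] ab by simp
qed

lemma card_outside_nbrs_Union:
  assumes clique: "is_clique V E C"
    and disjoint: "\<And>a b. a \<in> C \<Longrightarrow> b \<in> C \<Longrightarrow> a \<noteq> b \<Longrightarrow> (nbrs V E a - C) \<inter> (nbrs V E b - C) = {}"
  shows "card (\<Union>a\<in>C. nbrs V E a - C) = card C * (k + 1 - card C)"
proof -
  have "finite C"
    using clique by (rule finite_clique)
  hence "card (\<Union>a\<in>C. nbrs V E a - C) = (\<Sum>a\<in>C. card (nbrs V E a - C))"
    using disjoint by (intro card_UN_disjoint) auto
  also have "\<dots> = (\<Sum>a\<in>C. k + 1 - card C)"
    using card_nbrs_outside_clique[OF clique] by (intro sum.cong refl) (metis add_diff_cancel_right')
  finally show ?thesis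
    by simp
qed

lemma outside_nbrs_cover_iff_card_V:
  assumes clique: "is_clique V E C" and "C \<noteq> {}"
    and disjoint: "\<And>a b. a \<in> C \<Longrightarrow> b \<in> C \<Longrightarrow> a \<noteq> b \<Longrightarrow> (nbrs V E a - C) \<inter> (nbrs V E b - C) = {}"
  shows "(\<Union>a\<in>C. nbrs V E a - C) = V - C \<longleftrightarrow> card V = card C * (k + 2 - card C)"
proof -
  have C: "C \<subseteq> V" "finite C"
    using clique by (simp_all add: clique_subset_V finite_clique)
  have "(\<Union>a\<in>C. nbrs V E a - C) \<subseteq> V - C"
    using nbrs_subset by blast
  hence "(\<Union>a\<in>C. nbrs V E a - C) = V - C \<longleftrightarrow> card C * (k + 1 - card C) = card (V - C)"
    using card_outside_nbrs_Union[OF clique disjoint] finite_V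
    by (metis card_subset_eq finite_Diff)
  moreover have "card (V - C) + card C = card V"
    using C(1) by (rule card_Diff_add_card)
  moreover have "k + 2 - card C = Suc (k + 1 - card C)"
    using card_nbrs_outside_clique[OF clique] \<open>C \<noteq> {}\<close> by fastforce
  ultimately show ?thesis
    by auto
qed

lemma card_V_if_nexus_one:
  assumes clique: "is_clique V E C"
    and nexus: "\<And>v. v \<in> V - C \<Longrightarrow> card {w \<in> C. E v w} = 1"
  shows "card V = card C * (k + 2 - card C)"
proof (cases "C = {}")
  case True
  hence "V = {}"
    using nexus by auto
  thus ?thesis
    using True by simp
next
  case False
  have "V - C \<subseteq> (\<Union>a\<in>C. nbrs V E a - C)"
  proof
    fix v assume v: "v \<in> V - C"
    then obtain a where "a \<in> C" "E v a"
      using nexus[OF v] by (metis (mono_tags, lifting) card_1_singletonE mem_Collect_eq singletonI)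
    thus "v \<in> (\<Union>a\<in>C. nbrs V E a - C)"
      using v adj_sym by auto
  qed
  hence "(\<Union>a\<in>C. nbrs V E a - C) = V - C"
    using nbrs_subset by blast
  thus ?thesis
    using outside_nbrs_cover_iff_card_V[OF clique False] outside_nbrs_disjoint_if_nexus_one[OF nexus]
    by blast
qed

lemma clique_dominating:
  assumes clique: "is_clique V E C" and lam: "lam + 2 = card C"
    and size: "card V = card C * (k + 2 - card C)" and u: "u \<in> V - C"
  shows "\<exists>a\<in>C. E u a"
proof -
  have "C \<noteq> {}"
    using lam by auto
  moreover have "(nbrs V E a - C) \<inter> (nbrs V E b - C) = {}" if "a \<in> C" "b \<in> C" "a \<noteq> b" for a b
    using card_common_nbrs_in_clique[OF clique that] lam by simp
  ultimately have "(\<Union>a\<in>C. nbrs V E a - C) = V - C"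
    using outside_nbrs_cover_iff_card_V[OF clique] size by blast
  hence "u \<in> (\<Union>a\<in>C. nbrs V E a - C)"
    using u by blast
  thus ?thesis
    using adj_sym by auto
qed

lemma lam_add_card_V_if_nexus_pred:
  assumes clique: "is_clique V E C"
    and nexus: "\<And>v. v \<in> V - C \<Longrightarrow> card {w \<in> C. E v w} + 1 = card C"
    and ab: "a \<in> C" "b \<in> C" "a \<noteq> b"
  shows "lam + card V = 2 * k"
proof -
  have C: "C \<subseteq> V" "finite C"
    using clique by (simp_all add: clique_subset_V finite_clique)
  have "(nbrs V E a - C) \<union> (nbrs V E b - C) = V - C"
  proof (intro equalityI subsetI)
    fix v assume v: "v \<in> V - C"
    have "E v a \<or> E v b"
    proof (rule ccontr)
      assume "\<not> (E v a \<or> E v b)"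
      hence "card {w \<in> C. E v w} \<le> card (C - {a, b})"
        using C by (intro card_mono) auto
      thus False
        using nexus[OF v] ab C card_mono[OF C(2), of "{a, b}"] by (simp add: card_Diff_subset)
    qed
    thus "v \<in> (nbrs V E a - C) \<union> (nbrs V E b - C)"
      using v adj_sym by auto
  qed (auto simp: nbrs_def)
  hence "card (nbrs V E a - C) + card (nbrs V E b - C)
      = card (V - C) + card ((nbrs V E a - C) \<inter> (nbrs V E b - C))"
    by (metis card_Un_Int finite_Diff finite_nbrs)
  moreover have "card (V - C) + card C = card V"
    using C(1) by (rule card_Diff_add_card)
  ultimately show ?thesis
    using card_nbrs_outside_clique[OF clique ab(1)] card_nbrs_outside_clique[OF clique ab(2)]
      card_common_nbrs_in_clique[OF clique ab] by linarith
qed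

lemma common_nbr_unique_if_lam_one:
  assumes "lam = 1" "E x y" "E x w" "E y w" "E x w'" "E y w'"
  shows "w = w'"
proof -
  obtain t where "nbrs V E x \<inter> nbrs V E y = {t}"
    using common_nbrs[OF \<open>E x y\<close>] \<open>lam = 1\<close> card_1_singletonE by blast
  thus ?thesis
    using assms by (metis IntI mem_nbrs singletonD)
qed

text \<open>With \<open>lam = 1\<close> and \<open>|V| = 3(k - 1)\<close> every vertex off a triangle sees one of its
  vertices: the graph is the collinearity graph of a generalized quadrangle of order \<open>(2, t)\<close>.
  For non-adjacent \<open>x, y\<close>, the map sending a neighbour \<open>z\<close> of \<open>x\<close> to the third vertex of the
  unique triangle on \<open>x z\<close> is an involution on the neighbourhood of \<open>x\<close> that swaps the
  neighbours and the non-neighbours of \<open>y\<close>; so \<open>y\<close> has exactly \<open>k/2\<close> neighbours there.\<close>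
lemma card_common_nbrs_nonadjacent_if_lam_one:
  assumes lam: "lam = 1" and size: "card V = 3 * (k - 1)"
    and xy: "x \<in> V" "y \<in> V" "x \<noteq> y" "\<not> E x y"
  shows "2 * card (nbrs V E x \<inter> nbrs V E y) = k"
proof -
  let ?N = "nbrs V E x"
  have "\<exists>w. E x w \<and> E z w" if "z \<in> ?N" for z
  proof -
    have "card (?N \<inter> nbrs V E z) = 1"
      using common_nbrs[of x z] that lam by simp
    then obtain w where "?N \<inter> nbrs V E z = {w}"
      by (rule card_1_singletonE)
    thus ?thesis
      by (metis Int_iff mem_nbrs singletonI)
  qed
  then obtain f where f: "\<And>z. z \<in> ?N \<Longrightarrow> E x (f z) \<and> E z (f z)"
    by metis
  have f_N: "f z \<in> ?N" if "z \<in> ?N" for z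
    using f[OF that] by simp
  have f_involution: "f (f z) = z" if z: "z \<in> ?N" for z
    using common_nbr_unique_if_lam_one[OF lam, of x "f z" "f (f z)" z] f[OF z] f[OF f_N[OF z]] z
      adj_sym by auto
  have f_swaps: "E y z \<longleftrightarrow> \<not> E y (f z)" if z: "z \<in> ?N" for z
  proof -
    have xz: "E x z" "E x (f z)" "E z (f z)"
      using z f[OF z] by auto
    hence "x \<noteq> z" "x \<noteq> f z" "z \<noteq> f z"
      using adj_irrefl by auto
    hence "card {x, z, f z} = 3"
      by simp
    moreover have "is_clique V E {x, z, f z}"
      using xz adj_in_V adj_sym by (auto simp: is_clique_def)
    moreover have "y \<in> V - {x, z, f z}"
      using xy xz by auto
    ultimately have "E y x \<or> E y z \<or> E y (f z)"
      using clique_dominating[of "{x, z, f z}" y] lam size by auto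
    moreover have "\<not> (E y z \<and> E y (f z))"
      using common_nbr_unique_if_lam_one[OF lam xz(3), of x y] xz xy adj_sym by blast
    ultimately show ?thesis
      using xy(4) adj_sym by blast
  qed
  let ?A = "?N \<inter> nbrs V E y" and ?B = "?N - nbrs V E y"
  have inj: "inj_on f ?N"
    by (rule inj_onI) (metis f_involution)
  have "f ` ?A \<subseteq> ?B" "f ` ?B \<subseteq> ?A"
    using f_N f_swaps by auto
  hence "card ?A \<le> card ?B" "card ?B \<le> card ?A"
    using card_inj_on_le[OF inj_on_subset[OF inj]] by auto
  moreover have "card ?A + card ?B = k"
    using card_Int_Diff[of ?N "nbrs V E y"] degree xy by simp
  ultimately show ?thesis
    by simp
qed

lemma strongly_regular_if_lam_one:
  assumes "lam = 1" and "card V = 3 * (k - 1)"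
  shows "strongly_regular V E"
  unfolding strongly_regular_iff
proof (intro exI ballI impI)
  fix x y assume "x \<in> V" "y \<in> V" "x \<noteq> y \<and> \<not> E x y"
  hence "k = 2 * card (nbrs V E x \<inter> nbrs V E y)"
    using card_common_nbrs_nonadjacent_if_lam_one[OF assms] by simp
  thus "card (nbrs V E x \<inter> nbrs V E y) = k div 2"
    by simp
qed

lemma strongly_regular_if_small_regular_clique:
  assumes "regular_clique V E C" and "card C \<le> 3"
  shows "strongly_regular V E"
proof -
  obtain e where e: "e > 0" and nexus: "\<And>v. v \<in> V - C \<Longrightarrow> card {w \<in> C. E v w} = e"
    and clique: "is_clique V E C"
    using assms(1) unfolding regular_clique_def by blast
  have C: "C \<subseteq> V" "finite C"
    using clique by (simp_all add: clique_subset_V finite_clique)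
  have nexus_le: "card {w \<in> C. E v w} \<le> card C" for v
    using C(2) by (intro card_mono) auto
  have "e \<le> card C" if "V - C \<noteq> {}"
    using that nexus nexus_le by blast
  then consider (universal) "V - C = {} \<or> e = card C" | (pred) "e + 1 = card C"
    | (one) "e = 1" "card C = 3"
    using e assms(2) by linarith
  thus ?thesis
  proof cases
    case universal
    have "C \<noteq> {}"
      using universal e has_edge adj_in_V by auto
    then obtain a where a: "a \<in> C"
      by blast
    have "E a y" if y: "y \<in> V" "y \<noteq> a" for y
    proof (cases "y \<in> C")
      case True
      thus ?thesis
        using clique a y by (simp add: is_clique_def)
    next
      case False
      hence "card {w \<in> C. E y w} = card C"
        using universal nexus y by auto
      hence "{w \<in> C. E y w} = C"
        using C(2) by (intro card_subset_eq) auto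
      thus ?thesis
        using a adj_sym by blast
    qed
    thus ?thesis
      using strongly_regular_if_universal_vertex a C by blast
  next
    case pred
    hence "\<not> card C \<le> Suc 0"
      using e by simp
    then obtain a b where ab: "a \<in> C" "b \<in> C" "a \<noteq> b"
      using card_le_Suc0_iff_eq[OF C(2)] by blast
    have "\<And>v. v \<in> V - C \<Longrightarrow> card {w \<in> C. E v w} + 1 = card C"
      using nexus pred by simp
    thus ?thesis
      using lam_add_card_V_if_nexus_pred[OF clique _ ab] strongly_regular_if_lam_add_card_eq
      by blast
  next
    case one
    hence "\<not> card C \<le> Suc 0"
      by simp
    then obtain a b where ab: "a \<in> C" "b \<in> C" "a \<noteq> b"
      using card_le_Suc0_iff_eq[OF C(2)] by blast
    have nexus_one: "\<And>v. v \<in> V - C \<Longrightarrow> card {w \<in> C. E v w} = 1"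
      using nexus one by simp
    have "lam = 1"
      using card_common_nbrs_in_clique[OF clique ab] outside_nbrs_disjoint_if_nexus_one[OF nexus_one ab]
        one by simp
    moreover have "card V = 3 * (k - 1)"
      using card_V_if_nexus_one[OF clique nexus_one] one by simp
    ultimately show ?thesis
      by (rule strongly_regular_if_lam_one)
  qed
qed

end

theorem proposition5p2:
  fixes V :: "'a set" and E :: "'a \<Rightarrow> 'a \<Rightarrow> bool"
  assumes "edge_regular V E"
    and "\<exists>C. regular_clique V E C"
    and "\<not> strongly_regular V E"
  shows "\<exists>C. regular_clique V E C \<and> card C \<ge> 4"
proof -
  obtain k lam where "edge_regular_graph V E k lam"
    using assms(1) edge_regular_iff_edge_regular_graph by blast
  moreover obtain C where "regular_clique V E C"
    using assms(2) by blast
  ultimately have "card C \<ge> 4"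
    using edge_regular_graph.strongly_regular_if_small_regular_clique assms(3) by fastforce
  thus ?thesis
    using \<open>regular_clique V E C\<close> by blast
qed

end
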